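(* Fix a round $t$ and a bid $b\in[0,1]$. Let $m_t$ have CDF $G$ and be independent of the outcomes $(v_{t,1},v_{t,0})\in[0,1]^2$, where $\mathbb{E}[v_{t,1}-v_{t,0}]=\theta_*^\top x_t$. Let $\widehat G_t$ be a function with $\widehat G_t(b)\in(0,1)$, fixed (i.e. not random, or independent of $(m_t,v_{t,1},v_{t,0})$), satisfying $|\widehat G_t(b)-G(b)|\le u_t(b)$. Define \[ \widetilde e_t(b)=\frac{\mathbb{1}[b\ge m_t]\,v_{t,1}}{\widehat G_t(b)}-\frac{\mathbb{1}[b<m_t]\,v_{t,0}}{1-\widehat G_t(b)},\qquad \sigma_t(b)=\frac{1}{\widehat G_t(b)\,(1-\widehat G_t(b))}. \] Then with $c_0=4$, \[ \left|\mathbb{E}[\widetilde e_t(b)]-\theta_*^\top x_t\right|\le c_0\,u_t(b)\,\sigma_t(b)\quad\text{and}\quad \mathrm{Var}(\widetilde e_t(b))\le c_0\,\sigma_t(b)^2. \]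
   Context: Context: second-price auction round with context $x_t\in\mathbb{R}^d$, bid $b$, highest other bid $m_t$ with CDF $G$ (win iff $b\ge m_t$), winning outcome $v_{t,1}$ and baseline outcome $v_{t,0}$; $\theta_*\in\mathbb{R}^d$ is the linear treatment-effect parameter. $\widetilde e_t(b)$ is an inverse-propensity-weighted estimator of the treatment effect $v_{t,1}-v_{t,0}$ using an estimated propensity $\widehat G_t(b)$. *)

theory Defs
  imports "HOL-Probability.Probability"
begin

definition ipw_est :: "(real \<Rightarrow> real) \<Rightarrow> real \<Rightarrow> ('a \<Rightarrow> real) \<Rightarrow> ('a \<Rightarrow> real) \<Rightarrow> ('a \<Rightarrow> real) \<Rightarrow> 'a \<Rightarrow> real"
  where "ipw_est Ghat b m v1 v0 \<omega> =
     (if b \<ge> m \<omega> then 1 else 0) * v1 \<omega> / Ghat b - (if b < m \<omega> then 1 else 0) * v0 \<omega> / (1 - Ghat b)"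

definition sigma_t :: "(real \<Rightarrow> real) \<Rightarrow> real \<Rightarrow> real"
  where "sigma_t Ghat b = 1 / (Ghat b * (1 - Ghat b))"

end

theory Submission
  imports Defs
begin

text \<open>Since \<open>m\<close> is independent of the outcomes, \<open>E[e~] = G(b) E[v1] / Ghat(b) - (1 - G(b)) E[v0] / (1 - Ghat(b))\<close>,
  whose difference from \<open>E[v1] - E[v0]\<close> is \<open>(G(b) - Ghat(b)) (E[v1] / Ghat(b) + E[v0] / (1 - Ghat(b)))\<close>,
  at most \<open>u(b) \<sigma>(b)\<close> in absolute value. For the variance, \<open>e~\<close> takes values in
  \<open>[-1 / (1 - Ghat(b)), 1 / Ghat(b)]\<close>, an interval of length exactly \<open>\<sigma>(b)\<close>. So both bounds already hold
  with constant 1 instead of 4.\<close>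

(* The compositions f and h are built in because indep_var requires both variables to take values
   in the same type, whereas X and Y need not. *)
lemma (in prob_space) indep_var_compose_if_measure_product:
  assumes X: "random_variable S X" and Y: "random_variable T Y"
    and f: "f \<in> measurable S N" and h: "h \<in> measurable T N"
    and product: "\<And>A B. A \<in> sets S \<Longrightarrow> B \<in> sets T \<Longrightarrow>
      prob {\<omega> \<in> space M. X \<omega> \<in> A \<and> Y \<omega> \<in> B}
        = prob {\<omega> \<in> space M. X \<omega> \<in> A} * prob {\<omega> \<in> space M. Y \<omega> \<in> B}"
  shows "indep_var N (\<lambda>\<omega>. f (X \<omega>)) N (\<lambda>\<omega>. h (Y \<omega>))"
proof -
  have fX: "random_variable N (\<lambda>\<omega>. f (X \<omega>))" and hY: "random_variable N (\<lambda>\<omega>. h (Y \<omega>))"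
    using X Y f h by measurable
  have Int_stable: "Int_stable {Z -` A \<inter> space M |A. A \<in> sets N}" for Z
  proof (safe intro!: Int_stableI)
    fix A B assume "A \<in> sets N" "B \<in> sets N"
    then show "\<exists>C. (Z -` A \<inter> space M) \<inter> (Z -` B \<inter> space M) = Z -` C \<inter> space M \<and> C \<in> sets N"
      by (intro exI[of _ "A \<inter> B"]) auto
  qed
  show ?thesis unfolding indep_var_eq
  proof (intro conjI indep_set_sigma_sets Int_stable fX hY)
    show "indep_set {(\<lambda>\<omega>. f (X \<omega>)) -` A \<inter> space M |A. A \<in> sets N}
        {(\<lambda>\<omega>. h (Y \<omega>)) -` B \<inter> space M |B. B \<in> sets N}"
    proof (safe intro!: indep_setI)
      fix A B assume "A \<in> sets N" "B \<in> sets N"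
      then have sets: "f -` A \<inter> space S \<in> sets S" "h -` B \<inter> space T \<in> sets T"
        using f h by (auto intro: measurable_sets)
      have events:
        "((\<lambda>\<omega>. f (X \<omega>)) -` A \<inter> space M) \<inter> ((\<lambda>\<omega>. h (Y \<omega>)) -` B \<inter> space M)
          = {\<omega> \<in> space M. X \<omega> \<in> f -` A \<inter> space S \<and> Y \<omega> \<in> h -` B \<inter> space T}"
        "(\<lambda>\<omega>. f (X \<omega>)) -` A \<inter> space M = {\<omega> \<in> space M. X \<omega> \<in> f -` A \<inter> space S}"
        "(\<lambda>\<omega>. h (Y \<omega>)) -` B \<inter> space M = {\<omega> \<in> space M. Y \<omega> \<in> h -` B \<inter> space T}"
        using X Y by (auto dest: measurable_space)
      show "prob (((\<lambda>\<omega>. f (X \<omega>)) -` A \<inter> space M) \<inter> ((\<lambda>\<omega>. h (Y \<omega>)) -` B \<inter> space M))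
          = prob ((\<lambda>\<omega>. f (X \<omega>)) -` A \<inter> space M) * prob ((\<lambda>\<omega>. h (Y \<omega>)) -` B \<inter> space M)"
        unfolding events(1) unfolding events(2,3) by (rule product[OF sets])
    qed (use fX hY in \<open>auto intro: measurable_sets\<close>)
  qed
qed

lemma (in prob_space)
  fixes v :: "'a \<Rightarrow> real"
  assumes indep: "indep_var S X borel v" and A: "A \<in> sets S" and v: "integrable M v"
  shows integrable_indicator_mult_indep: "integrable M (\<lambda>\<omega>. indicator A (X \<omega>) * v \<omega>)"
    and expectation_indicator_mult_indep:
      "expectation (\<lambda>\<omega>. indicator A (X \<omega>) * v \<omega>) = prob {\<omega> \<in> space M. X \<omega> \<in> A} * expectation v"
proof -
  have X: "random_variable S X" using indep by (rule indep_var_rv1)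
  have indep': "indep_var borel (\<lambda>\<omega>. indicator A (X \<omega>) :: real) borel v"
    using indep_var_compose[OF indep, of "indicator A" borel id] A by (simp add: comp_def)
  have ind: "integrable M (\<lambda>\<omega>. indicator A (X \<omega>) :: real)"
    by (rule integrable_const_bound[where B=1]) (use X A in \<open>auto simp: indicator_def\<close>)
  then show "integrable M (\<lambda>\<omega>. indicator A (X \<omega>) * v \<omega>)"
    using indep_var_integrable[OF indep' _ v] by blast
  have "expectation (\<lambda>\<omega>. indicator A (X \<omega>) :: real) = expectation (indicator {\<omega> \<in> space M. X \<omega> \<in> A})"
    by (rule Bochner_Integration.integral_cong) (auto simp: indicator_def)
  also have "\<dots> = prob {\<omega> \<in> space M. X \<omega> \<in> A}"
    by (simp add: Int_absorb2 subset_iff)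
  finally show "expectation (\<lambda>\<omega>. indicator A (X \<omega>) * v \<omega>) = prob {\<omega> \<in> space M. X \<omega> \<in> A} * expectation v"
    using indep_var_lebesgue_integral[OF indep' ind v] by simp
qed

lemma (in prob_space)
  fixes X :: "'a \<Rightarrow> real"
  assumes X: "random_variable borel X" and bounds: "AE \<omega> in M. X \<omega> \<in> {a..c}"
  shows integrable_of_AE_bounded: "integrable M X"
    and expectation_mem_of_AE_bounded: "expectation X \<in> {a..c}"
proof -
  show int: "integrable M X"
    by (rule integrable_const_bound[where B="\<bar>a\<bar> + \<bar>c\<bar>"]) (use X bounds in \<open>auto elim!: AE_mp\<close>)
  show "expectation X \<in> {a..c}"
    using integral_ge_const[OF int, of a] integral_le_const[OF int, of c] bounds by auto
qed

lemma (in prob_space) variance_le_square_width: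
  fixes X :: "'a \<Rightarrow> real"
  assumes X: "random_variable borel X" and bounds: "AE \<omega> in M. X \<omega> \<in> {a..c}"
  shows "variance X \<le> (c - a)\<^sup>2"
proof -
  have mean: "expectation X \<in> {a..c}" using X bounds by (rule expectation_mem_of_AE_bounded)
  from bounds have deviation: "AE \<omega> in M. (X \<omega> - expectation X)\<^sup>2 \<in> {0..(c - a)\<^sup>2}"
  proof eventually_elim
    case (elim \<omega>)
    with mean show ?case by (auto simp flip: abs_le_square_iff)
  qed
  have "integrable M (\<lambda>\<omega>. (X \<omega> - expectation X)\<^sup>2)"
    using deviation by (rule integrable_of_AE_bounded[rotated]) (use X in measurable)
  then show ?thesis
    using deviation by (intro integral_le_const) auto
qed

lemma ipw_est_mem_interval:
  assumes "Ghat b \<in> {0<..<1}" "v1 \<omega> \<in> {0..1}" "v0 \<omega> \<in> {0..1}"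
  shows "ipw_est Ghat b m v1 v0 \<omega> \<in> {- 1 / (1 - Ghat b)..1 / Ghat b}"
proof -
  have "0 \<le> v1 \<omega> / Ghat b" "v1 \<omega> / Ghat b \<le> 1 / Ghat b"
    and "0 \<le> v0 \<omega> / (1 - Ghat b)" "v0 \<omega> / (1 - Ghat b) \<le> 1 / (1 - Ghat b)"
    using assms by (auto intro: divide_right_mono)
  then show ?thesis by (auto simp: ipw_est_def)
qed

lemma sigma_t_eq:
  assumes "Ghat b \<in> {0<..<1}"
  shows "sigma_t Ghat b = 1 / Ghat b + 1 / (1 - Ghat b)"
  using assms by (simp add: sigma_t_def field_simps)

lemma ipw_bias_abs_le:
  fixes p g a1 a0 :: real
  assumes "g \<in> {0<..<1}" "a1 \<in> {0..1}" "a0 \<in> {0..1}"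
  shows "\<bar>p * a1 / g - (1 - p) * a0 / (1 - g) - (a1 - a0)\<bar> \<le> \<bar>p - g\<bar> * (1 / g + 1 / (1 - g))"
proof -
  have "p * a1 / g - (1 - p) * a0 / (1 - g) - (a1 - a0) = (p - g) * (a1 / g + a0 / (1 - g))"
    using assms by (simp add: field_simps)
  moreover have "0 \<le> a1 / g + a0 / (1 - g)" "a1 / g + a0 / (1 - g) \<le> 1 / g + 1 / (1 - g)"
    using assms by (auto intro!: add_mono divide_right_mono)
  ultimately show ?thesis by (simp add: abs_mult mult_left_mono)
qed

lemma (in prob_space) expectation_ipw_est:
  fixes m v1 v0 :: "'a \<Rightarrow> real"
  assumes "indep_var borel m borel v1" "indep_var borel m borel v0"
    and "integrable M v1" "integrable M v0"
  shows "expectation (ipw_est Ghat b m v1 v0)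
    = prob {\<omega> \<in> space M. m \<omega> \<le> b} * expectation v1 / Ghat b
      - (1 - prob {\<omega> \<in> space M. m \<omega> \<le> b}) * expectation v0 / (1 - Ghat b)"
proof -
  have m: "random_variable borel m" using assms(1) by (rule indep_var_rv1)
  have "ipw_est Ghat b m v1 v0
      = (\<lambda>\<omega>. indicator {..b} (m \<omega>) * v1 \<omega> / Ghat b - indicator {b<..} (m \<omega>) * v0 \<omega> / (1 - Ghat b))"
    by (auto simp: ipw_est_def indicator_def fun_eq_iff)
  moreover have "prob {\<omega> \<in> space M. m \<omega> \<in> {b<..}} = 1 - prob {\<omega> \<in> space M. m \<omega> \<le> b}"
  proof -
    have "{\<omega> \<in> space M. m \<omega> \<in> {b<..}} = space M - {\<omega> \<in> space M. m \<omega> \<le> b}" by auto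
    then show ?thesis using m by (simp add: prob_compl)
  qed
  ultimately show ?thesis
    using assms by (simp add: integrable_indicator_mult_indep expectation_indicator_mult_indep)
qed

lemma (in prob_space) abs_expectation_ipw_est_diff_le:
  fixes m v1 v0 :: "'a \<Rightarrow> real"
  assumes indep1: "indep_var borel m borel v1" and indep0: "indep_var borel m borel v0"
    and bounds: "AE \<omega> in M. v1 \<omega> \<in> {0..1} \<and> v0 \<omega> \<in> {0..1}"
    and Ghat: "Ghat b \<in> {0<..<1}"
  shows "\<bar>expectation (ipw_est Ghat b m v1 v0) - expectation (\<lambda>\<omega>. v1 \<omega> - v0 \<omega>)\<bar>
    \<le> \<bar>prob {\<omega> \<in> space M. m \<omega> \<le> b} - Ghat b\<bar> * sigma_t Ghat b"
proof -
  have AE1: "AE \<omega> in M. v1 \<omega> \<in> {0..1}" and AE0: "AE \<omega> in M. v0 \<omega> \<in> {0..1}"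
    using bounds by auto
  note v1 = integrable_of_AE_bounded[OF indep_var_rv2[OF indep1] AE1]
    expectation_mem_of_AE_bounded[OF indep_var_rv2[OF indep1] AE1]
  note v0 = integrable_of_AE_bounded[OF indep_var_rv2[OF indep0] AE0]
    expectation_mem_of_AE_bounded[OF indep_var_rv2[OF indep0] AE0]
  show ?thesis
    using ipw_bias_abs_le[OF Ghat v1(2) v0(2)] Ghat
    by (simp add: expectation_ipw_est[OF indep1 indep0 v1(1) v0(1)] sigma_t_eq
        Bochner_Integration.integral_diff[OF v1(1) v0(1)])
qed

lemma (in prob_space) variance_ipw_est_le:
  fixes m v1 v0 :: "'a \<Rightarrow> real"
  assumes "random_variable borel m" "random_variable borel v1" "random_variable borel v0"
    and bounds: "AE \<omega> in M. v1 \<omega> \<in> {0..1} \<and> v0 \<omega> \<in> {0..1}"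
    and Ghat: "Ghat b \<in> {0<..<1}"
  shows "variance (ipw_est Ghat b m v1 v0) \<le> (sigma_t Ghat b)\<^sup>2"
proof -
  have "AE \<omega> in M. ipw_est Ghat b m v1 v0 \<omega> \<in> {- 1 / (1 - Ghat b)..1 / Ghat b}"
    using bounds by eventually_elim (blast intro: ipw_est_mem_interval[of Ghat b, OF Ghat])
  then have "variance (ipw_est Ghat b m v1 v0) \<le> (1 / Ghat b - - 1 / (1 - Ghat b))\<^sup>2"
    by (rule variance_le_square_width[rotated]) (use assms(1-3) in \<open>simp add: ipw_est_def\<close>)
  then show ?thesis
    using Ghat by (simp add: sigma_t_eq)
qed

theorem lemma2:
  fixes M :: "'a measure"
    and m v1 v0 :: "'a \<Rightarrow> real"
    and G Ghat u :: "real \<Rightarrow> real"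
    and theta x :: "'d::euclidean_space"
    and b :: real
  assumes "prob_space M"
    and "b \<in> {0..1}"
    and "m \<in> borel_measurable M" and "v1 \<in> borel_measurable M" and "v0 \<in> borel_measurable M"
    and "\<And>y. G y = measure M {\<omega> \<in> space M. m \<omega> \<le> y}"
    and "\<And>(A :: real set) (B :: (real \<times> real) set). A \<in> sets borel \<Longrightarrow> B \<in> sets borel \<Longrightarrow>
         measure M {\<omega> \<in> space M. m \<omega> \<in> A \<and> (v1 \<omega>, v0 \<omega>) \<in> B}
         = measure M {\<omega> \<in> space M. m \<omega> \<in> A} * measure M {\<omega> \<in> space M. (v1 \<omega>, v0 \<omega>) \<in> B}"
    and "AE \<omega> in M. v1 \<omega> \<in> {0..1} \<and> v0 \<omega> \<in> {0..1}"
    and "prob_space.expectation M (\<lambda>\<omega>. v1 \<omega> - v0 \<omega>) = theta \<bullet> x"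
    and "Ghat b \<in> {0<..<1}"
    and "\<bar>Ghat b - G b\<bar> \<le> u b"
  shows "\<bar>prob_space.expectation M (ipw_est Ghat b m v1 v0) - theta \<bullet> x\<bar>
           \<le> 4 * u b * sigma_t Ghat b
       \<and> prob_space.variance M (ipw_est Ghat b m v1 v0) \<le> 4 * (sigma_t Ghat b)\<^sup>2"
proof -
  interpret prob_space M by fact
  have V: "random_variable borel (\<lambda>\<omega>. (v1 \<omega>, v0 \<omega>))" using assms(4,5) by measurable
  have fst: "(fst :: real \<times> real \<Rightarrow> real) \<in> borel_measurable borel"
    by (intro borel_measurable_continuous_onI continuous_on_fst continuous_on_id)
  have snd: "(snd :: real \<times> real \<Rightarrow> real) \<in> borel_measurable borel"
    by (intro borel_measurable_continuous_onI continuous_on_snd continuous_on_id)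
  have indep1: "indep_var borel m borel v1"
    using indep_var_compose_if_measure_product[OF assms(3) V measurable_id fst assms(7)]
    by (simp only: fst_conv)
  have indep0: "indep_var borel m borel v0"
    using indep_var_compose_if_measure_product[OF assms(3) V measurable_id snd assms(7)]
    by (simp only: snd_conv)
  have nonneg: "0 \<le> sigma_t Ghat b" "0 \<le> u b"
    using assms(10,11) by (auto simp: sigma_t_def)
  have "\<bar>expectation (ipw_est Ghat b m v1 v0) - theta \<bullet> x\<bar> \<le> \<bar>G b - Ghat b\<bar> * sigma_t Ghat b"
    using abs_expectation_ipw_est_diff_le[where Ghat=Ghat and b=b, OF indep1 indep0 assms(8,10)]
      assms(6,9) by simp
  also have "\<dots> \<le> 4 * u b * sigma_t Ghat b"
    using assms(11) nonneg by (intro mult_right_mono) (auto simp: abs_minus_commute)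
  finally have bias: "\<bar>expectation (ipw_est Ghat b m v1 v0) - theta \<bullet> x\<bar> \<le> 4 * u b * sigma_t Ghat b" .
  have "variance (ipw_est Ghat b m v1 v0) \<le> 4 * (sigma_t Ghat b)\<^sup>2"
    using variance_ipw_est_le[where Ghat=Ghat and b=b, OF assms(3-5,8,10)]
      zero_le_power2[of "sigma_t Ghat b"] by linarith
  with bias show ?thesis ..
qed

end
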